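(* Let $a<b$ and let $X$ be a random variable taking values in $[a,b]$, with probability density function $f:[a,b]\rightarrow[0,1]$ and cumulative distribution function $F(x)=\Pr(X\le x)=\int_a^x f(t)\,dt$. Assume that $F$ is twice continuously differentiable in $(a,b)$ (so $F'=f$) with $f'\in L^2[a,b]$. Then for all $x\in[a,\frac{a+b}{2}]$, \[ \left|\frac{1}{2}[F(x)+F(a+b-x)]-\frac{b-E(X)}{b-a}\right|\leq \frac{(b-a)^{1/2}}{\pi}\left[\frac{(b-a)^2}{48}+\left(x-\frac{3a+b}{4}\right)^2\right]^{1/2}\|f'\|_2, \] where $E(X)$ is the expectation of $X$.
   Context: $\|g\|_2=\left(\int_a^b g(t)^2\,dt\right)^{1/2}$. *)

theory Defs
  imports "HOL-Analysis.Analysis"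
begin

definition l2norm_on :: "real \<Rightarrow> real \<Rightarrow> (real \<Rightarrow> real) \<Rightarrow> real" where
  "l2norm_on a b g = sqrt (integral {a..b} (\<lambda>t. (g t)\<^sup>2))"

definition expect_dens :: "real \<Rightarrow> real \<Rightarrow> (real \<Rightarrow> real) \<Rightarrow> real" where
  "expect_dens a b f = integral {a..b} (\<lambda>t. t * f t)"

end

theory Submission
  imports Defs
begin

text \<open>
  Let \<open>K\<close> be the Peano kernel of the functional: the continuous, piecewise quadratic function with
  \<open>K'' = 1\<close> except at \<open>x\<close> and \<open>a + b - x\<close>, where \<open>K'\<close> drops by \<open>(b - a) / 2\<close>, and with
  \<open>K a = K b = 0\<close>. Integrating by parts twice on the three pieces gives
  \<open>\<integral> K f' = \<integral> F - (b - a) / 2 * (F x + F (a + b - x))\<close>, and \<open>\<integral> F = b - E(X)\<close>, so the quantity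
  to be bounded is \<open>-\<integral> K f' / (b - a)\<close>. The Cauchy--Schwarz inequality bounds this by
  \<open>\<parallel>K\<parallel>\<^sub>2 \<parallel>f'\<parallel>\<^sub>2 / (b - a)\<close>, and an explicit computation gives
  \<open>\<parallel>K\<parallel>\<^sub>2\<^sup>2 \<le> (b - a)\<^sup>3 / 10 * ((b - a)\<^sup>2 / 48 + (x - (3a + b) / 4)\<^sup>2)\<close>; finally \<open>\<pi>\<^sup>2 \<le> 10\<close>.
\<close>

lemma pi_squared_le_10: "pi\<^sup>2 \<le> 10"
proof -
  have "pi\<^sup>2 \<le> 3.16\<^sup>2"
    using pi_approx(2) pi_gt_zero by (intro power_mono) auto
  then show ?thesis by (simp add: power2_eq_square)
qed

lemma square_le_mult_of_quadratic_bound: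
  fixes A B I :: real
  assumes quad: "\<And>s. 2 * s * I \<le> s\<^sup>2 * A + B" and "0 \<le> A"
  shows "I\<^sup>2 \<le> A * B"
proof (cases "A = 0")
  case True
  have "I = 0"
  proof (rule ccontr)
    assume "I \<noteq> 0"
    then show False
      using quad[of "(B + 1) / (2 * I)"] True by simp
  qed
  then show ?thesis using True by simp
next
  case False
  then have "A > 0" using \<open>0 \<le> A\<close> by simp
  then show ?thesis
    using quad[of "I / A"] by (simp add: power2_eq_square field_simps)
qed

lemma has_integral_Cauchy_Schwarz:
  fixes g h :: "'a::euclidean_space \<Rightarrow> real"
  assumes gh: "((\<lambda>t. g t * h t) has_integral I) S"
    and g2: "((\<lambda>t. (g t)\<^sup>2) has_integral A) S"
    and h2: "((\<lambda>t. (h t)\<^sup>2) has_integral B) S"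
  shows "\<bar>I\<bar> \<le> sqrt A * sqrt B"
proof -
  have "2 * s * I \<le> s\<^sup>2 * A + B" for s
  proof (rule has_integral_le)
    show "((\<lambda>t. 2 * s * (g t * h t)) has_integral 2 * s * I) S"
      using gh by (rule has_integral_mult_right)
    show "((\<lambda>t. s\<^sup>2 * (g t)\<^sup>2 + (h t)\<^sup>2) has_integral s\<^sup>2 * A + B) S"
      using g2 h2 by (intro has_integral_add has_integral_mult_right)
    show "2 * s * (g t * h t) \<le> s\<^sup>2 * (g t)\<^sup>2 + (h t)\<^sup>2" for t
      using sum_power2_ge_zero[of "s * g t - h t" 0] by (simp add: power2_eq_square algebra_simps)
  qed
  moreover have "0 \<le> A" using g2 by (rule has_integral_nonneg) simp
  ultimately have "I\<^sup>2 \<le> A * B" by (rule square_le_mult_of_quadratic_bound)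
  then show ?thesis
    by (metis real_sqrt_abs real_sqrt_le_mono real_sqrt_mult)
qed

lemma continuous_on_mult_vanishing_at_ends:
  fixes G f :: "real \<Rightarrow> real"
  assumes G: "continuous_on {a..b} G" "G a = 0" "G b = 0"
    and f_bounded: "\<forall>t\<in>{a..b}. \<bar>f t\<bar> \<le> M"
    and f_cont: "\<forall>t\<in>{a<..<b}. isCont f t"
  shows "continuous_on {a..b} (\<lambda>t. G t * f t)"
proof (clarsimp simp: continuous_on_eq_continuous_within)
  fix t assume t: "a \<le> t" "t \<le> b"
  show "continuous (at t within {a..b}) (\<lambda>t. G t * f t)"
  proof (cases "t \<in> {a<..<b}")
    case True
    then have "isCont G t" using continuous_on_interior[OF G(1)] by simp
    then have "isCont (\<lambda>t. G t * f t) t"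
      using f_cont True by (intro continuous_mult) auto
    then show ?thesis by (rule continuous_at_imp_continuous_within)
  next
    case False
    then have G0: "G t = 0" using t G(2,3) by auto
    have bound: "eventually (\<lambda>s. norm (G s * f s) \<le> \<bar>G s\<bar> * M) (at t within {a..b})"
      unfolding eventually_at_filter
    proof (intro always_eventually allI impI)
      fix s assume "s \<in> {a..b}"
      then have "\<bar>G s\<bar> * \<bar>f s\<bar> \<le> \<bar>G s\<bar> * M"
        using f_bounded by (intro mult_left_mono) auto
      then show "norm (G s * f s) \<le> \<bar>G s\<bar> * M"
        by (simp add: abs_mult)
    qed
    have "(G \<longlongrightarrow> G t) (at t within {a..b})"
      using G(1) t by (simp add: continuous_on_def)
    then have "((\<lambda>s. \<bar>G s\<bar> * M) \<longlongrightarrow> 0) (at t within {a..b})"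
      using tendsto_mult_right[OF tendsto_rabs, of G "G t" _ M] G0 by simp
    then have "((\<lambda>s. G s * f s) \<longlongrightarrow> 0) (at t within {a..b})"
      by (rule Lim_null_comparison[OF bound])
    then show ?thesis unfolding continuous_within using G0 by simp
  qed
qed

lemma has_integral_of_real_derivative:
  fixes P g :: "real \<Rightarrow> real"
  assumes "p \<le> q" "\<And>t. (P has_real_derivative g t) (at t)"
  shows "(g has_integral P q - P p) {p..q}"
  using assms
  by (intro fundamental_theorem_of_calculus)
     (auto simp: has_real_derivative_iff_has_vector_derivative[symmetric] intro: has_field_derivative_at_within)

lemma has_integral_by_parts_twice:
  fixes g f f' F :: "real \<Rightarrow> real"
  assumes "p \<le> q"
    and F': "\<forall>t\<in>{p<..<q}. (F has_real_derivative f t) (at t)"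
    and f': "\<forall>t\<in>{p<..<q}. (f has_real_derivative f' t) (at t)"
    and g': "\<forall>t\<in>{p<..<q}. (g has_real_derivative t - c) (at t)"
    and cont: "continuous_on {p..q} (\<lambda>t. g t * f t - (t - c) * F t)"
  shows "((\<lambda>t. g t * f' t - F t) has_integral
           (g q * f q - (q - c) * F q) - (g p * f p - (p - c) * F p)) {p..q}"
proof -
  have "((\<lambda>t. g t * f t - (t - c) * F t) has_real_derivative g t * f' t - F t) (at t)"
    if "t \<in> {p<..<q}" for t
  proof -
    have "((\<lambda>t. g t * f t - (t - c) * F t) has_real_derivative
           (t - c) * f t + f' t * g t - (1 * F t + f t * (t - c))) (at t)"
      using that F' f' g' by (intro DERIV_diff DERIV_mult derivative_eq_intros) auto
    then show ?thesis by (simp add: algebra_simps)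
  qed
  then show ?thesis
    using fundamental_theorem_of_calculus_interior[OF \<open>p \<le> q\<close> cont]
    by (simp add: has_real_derivative_iff_has_vector_derivative)
qed

lemma expect_dens_eq_integral_cdf:
  fixes f F :: "real \<Rightarrow> real"
  assumes "a \<le> b" and F_cont: "continuous_on {a..b} F"
    and F': "\<forall>t\<in>{a<..<b}. (F has_real_derivative f t) (at t)"
    and "F a = 0" "F b = 1"
  shows "expect_dens a b f = b - integral {a..b} F"
proof -
  have "((\<lambda>t. F t + t * f t) has_integral (\<lambda>t. t * F t) b - (\<lambda>t. t * F t) a) {a..b}"
  proof (rule fundamental_theorem_of_calculus_interior[OF \<open>a \<le> b\<close>])
    show "continuous_on {a..b} (\<lambda>t. t * F t)" using F_cont by (intro continuous_intros)
    show "((\<lambda>t. t * F t) has_vector_derivative F t + t * f t) (at t)" if "t \<in> {a<..<b}" for t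
      using F' that unfolding has_real_derivative_iff_has_vector_derivative[symmetric]
      by (auto intro!: derivative_eq_intros)
  qed
  moreover have "(F has_integral integral {a..b} F) {a..b}"
    using integrable_continuous_interval[OF F_cont] by (rule integrable_integral)
  ultimately have "((\<lambda>t. (F t + t * f t) - F t) has_integral b - integral {a..b} F) {a..b}"
    using \<open>F a = 0\<close> \<open>F b = 1\<close> by (auto dest: has_integral_diff)
  then show ?thesis
    unfolding expect_dens_def by (simp add: integral_unique)
qed

definition peano_kernel :: "real \<Rightarrow> real \<Rightarrow> real \<Rightarrow> real \<Rightarrow> real" where
  "peano_kernel a b x t =
     (t - a)\<^sup>2 / 2 - (b - a) / 2 * (max 0 (t - x) + max 0 (t - (a + b - x)))"

lemma peano_kernel_left:
  assumes "x \<le> (a + b) / 2" "t \<le> x"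
  shows "peano_kernel a b x t = (t - a)\<^sup>2 / 2"
  using assms by (simp add: peano_kernel_def)

lemma peano_kernel_middle:
  assumes "x \<le> t" "t \<le> a + b - x"
  shows "peano_kernel a b x t = (t - (a + b) / 2)\<^sup>2 / 2 + ((x - a)\<^sup>2 - ((a + b) / 2 - x)\<^sup>2) / 2"
  using assms by (simp add: peano_kernel_def power2_eq_square field_simps)

lemma peano_kernel_right:
  assumes "x \<le> (a + b) / 2" "a + b - x \<le> t"
  shows "peano_kernel a b x t = (t - b)\<^sup>2 / 2"
  using assms by (simp add: peano_kernel_def power2_eq_square field_simps)

lemma continuous_on_peano_kernel: "continuous_on S (peano_kernel a b x)"
  unfolding peano_kernel_def by (intro continuous_intros) auto

lemma continuous_on_peano_kernel_mult:
  fixes f :: "real \<Rightarrow> real"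
  assumes x: "a \<le> x" "x \<le> (a + b) / 2"
    and f_bounded: "\<forall>t\<in>{a..b}. \<bar>f t\<bar> \<le> M"
    and f_cont: "\<forall>t\<in>{a<..<b}. isCont f t"
  shows "continuous_on {a..b} (\<lambda>t. peano_kernel a b x t * f t)"
proof (rule continuous_on_mult_vanishing_at_ends[OF _ _ _ f_bounded f_cont])
  show "continuous_on {a..b} (peano_kernel a b x)" by (rule continuous_on_peano_kernel)
  show "peano_kernel a b x a = 0" "peano_kernel a b x b = 0"
    using x by (simp_all add: peano_kernel_left peano_kernel_right)
qed

lemma has_integral_peano_kernel_mult_deriv:
  fixes f f' F :: "real \<Rightarrow> real"
  assumes x: "a \<le> x" "x \<le> (a + b) / 2"
    and F_cont: "continuous_on {a..b} F"
    and F': "\<forall>t\<in>{a<..<b}. (F has_real_derivative f t) (at t)"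
    and f': "\<forall>t\<in>{a<..<b}. (f has_real_derivative f' t) (at t)"
    and f_bounded: "\<forall>t\<in>{a..b}. \<bar>f t\<bar> \<le> M"
  shows "((\<lambda>t. peano_kernel a b x t * f' t) has_integral
           integral {a..b} F - (b - a) / 2 * (F x + F (a + b - x))) {a..b}"
proof -
  define K where "K = peano_kernel a b x"
  define y where "y = a + b - x"
  define m where "m = (a + b) / 2"
  have order: "a \<le> x" "x \<le> y" "y \<le> b" using x by (auto simp: y_def)
  have "\<forall>t\<in>{a<..<b}. isCont f t" using f' DERIV_isCont by blast
  then have Kf_F_cont: "continuous_on {a..b} (\<lambda>t. K t * f t - (t - c) * F t)" for c
    unfolding K_def using F_cont
    by (intro continuous_on_diff continuous_on_peano_kernel_mult[OF x f_bounded] continuous_intros)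
  have piece: "((\<lambda>t. K t * f' t - F t) has_integral
                 K q * f q - (q - c) * F q - (K p * f p - (p - c) * F p)) {p..q}"
    if pq: "a \<le> p" "p \<le> q" "q \<le> b"
      and K_eq: "\<forall>t\<in>{p..q}. K t = g t" and g': "\<And>t. (g has_real_derivative t - c) (at t)"
    for p q c and g :: "real \<Rightarrow> real"
  proof (rule has_integral_by_parts_twice[OF \<open>p \<le> q\<close>])
    show "\<forall>t\<in>{p<..<q}. (F has_real_derivative f t) (at t)"
      "\<forall>t\<in>{p<..<q}. (f has_real_derivative f' t) (at t)"
      using F' f' pq by auto
    show "\<forall>t\<in>{p<..<q}. (K has_real_derivative t - c) (at t)"
    proof
      fix t assume "t \<in> {p<..<q}"
      then show "(K has_real_derivative t - c) (at t)"
        using K_eq by (intro has_field_derivative_transform_within_open[OF g', of "{p<..<q}"]) auto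
    qed
    show "continuous_on {p..q} (\<lambda>t. K t * f t - (t - c) * F t)"
      using pq by (intro continuous_on_subset[OF Kf_F_cont]) auto
  qed
  have left: "((\<lambda>t. K t * f' t - F t) has_integral
                K x * f x - (x - a) * F x - (K a * f a - (a - a) * F a)) {a..x}"
    using order x by (intro piece[where g="\<lambda>t. (t - a)\<^sup>2 / 2"])
      (auto simp: K_def peano_kernel_left intro!: derivative_eq_intros)
  have middle: "((\<lambda>t. K t * f' t - F t) has_integral
                K y * f y - (y - m) * F y - (K x * f x - (x - m) * F x)) {x..y}"
    using order by (intro piece[where g="\<lambda>t. (t - m)\<^sup>2 / 2 + ((x - a)\<^sup>2 - (m - x)\<^sup>2) / 2"])
      (auto simp: K_def y_def m_def peano_kernel_middle intro!: derivative_eq_intros)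
  have right: "((\<lambda>t. K t * f' t - F t) has_integral
                K b * f b - (b - b) * F b - (K y * f y - (y - b) * F y)) {y..b}"
    using order x by (intro piece[where g="\<lambda>t. (t - b)\<^sup>2 / 2"])
      (auto simp: K_def y_def peano_kernel_right intro!: derivative_eq_intros)
  have pieces: "((\<lambda>t. K t * f' t - F t) has_integral
      (K x * f x - (x - a) * F x - (K a * f a - (a - a) * F a))
      + (K y * f y - (y - m) * F y - (K x * f x - (x - m) * F x))
      + (K b * f b - (b - b) * F b - (K y * f y - (y - b) * F y))) {a..b}"
    using order by (intro has_integral_combine[OF _ _ has_integral_combine[OF _ _ left middle] right]) auto
  have "K a = 0" "K b = 0"
    using x by (simp_all add: K_def peano_kernel_left peano_kernel_right)
  then have "((\<lambda>t. K t * f' t - F t) has_integral - (b - a) / 2 * (F x + F y)) {a..b}"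
    by (intro has_integral_eq_rhs[OF pieces]) (simp add: m_def y_def field_simps)
  moreover have "(F has_integral integral {a..b} F) {a..b}"
    using integrable_continuous_interval[OF F_cont] by (rule integrable_integral)
  ultimately have "((\<lambda>t. (K t * f' t - F t) + F t) has_integral
                    - (b - a) / 2 * (F x + F y) + integral {a..b} F) {a..b}"
    by (rule has_integral_add)
  then have "((\<lambda>t. (K t * f' t - F t) + F t) has_integral
               integral {a..b} F - (b - a) / 2 * (F x + F y)) {a..b}"
    by (rule has_integral_eq_rhs) (simp add: field_simps)
  then show ?thesis unfolding K_def y_def by simp
qed

lemma has_integral_peano_kernel_sq:
  fixes a b x :: real
  defines "u \<equiv> x - a" and "v \<equiv> (a + b) / 2 - x"
  assumes x: "a \<le> x" "x \<le> (a + b) / 2"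
  shows "((\<lambda>t. (peano_kernel a b x t)\<^sup>2) has_integral
           u ^ 5 / 10 + v ^ 5 / 10 + (u\<^sup>2 - v\<^sup>2) * v ^ 3 / 3 + (u\<^sup>2 - v\<^sup>2)\<^sup>2 * v / 2) {a..b}"
proof -
  define K where "K = peano_kernel a b x"
  define y where "y = a + b - x"
  define m where "m = (a + b) / 2"
  define d where "d = (u\<^sup>2 - v\<^sup>2) / 2"
  have order: "a \<le> x" "x \<le> y" "y \<le> b" using x by (auto simp: y_def)
  have piece: "((\<lambda>t. (K t)\<^sup>2) has_integral P q - P p) {p..q}"
    if "p \<le> q" and K_eq: "\<forall>t\<in>{p..q}. K t = g t"
      and P': "\<And>t. (P has_real_derivative (g t)\<^sup>2) (at t)"
    for p q and g P :: "real \<Rightarrow> real"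
    using has_integral_of_real_derivative[OF \<open>p \<le> q\<close> P']
    by (rule has_integral_eq[rotated]) (simp add: K_eq)
  have left: "((\<lambda>t. (K t)\<^sup>2) has_integral (x - a) ^ 5 / 20 - (a - a) ^ 5 / 20) {a..x}"
    using order x
    by (intro piece[where g="\<lambda>t. (t - a)\<^sup>2 / 2"])
      (auto simp: K_def peano_kernel_left field_simps eval_nat_numeral intro!: derivative_eq_intros)
  define Phi where "Phi t = (t - m) ^ 5 / 20 + d * (t - m) ^ 3 / 3 + d\<^sup>2 * t" for t
  have middle: "((\<lambda>t. (K t)\<^sup>2) has_integral Phi y - Phi x) {x..y}"
    using order unfolding Phi_def
    by (intro piece[where g="\<lambda>t. (t - m)\<^sup>2 / 2 + d"])
      (auto simp: K_def y_def m_def d_def u_def v_def peano_kernel_middle field_simps eval_nat_numeral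
        intro!: derivative_eq_intros)
  have right: "((\<lambda>t. (K t)\<^sup>2) has_integral (b - b) ^ 5 / 20 - (y - b) ^ 5 / 20) {y..b}"
    using order x
    by (intro piece[where g="\<lambda>t. (t - b)\<^sup>2 / 2"])
      (auto simp: K_def y_def peano_kernel_right field_simps eval_nat_numeral intro!: derivative_eq_intros)
  have pieces: "((\<lambda>t. (K t)\<^sup>2) has_integral
      ((x - a) ^ 5 / 20 - (a - a) ^ 5 / 20) + (Phi y - Phi x) + ((b - b) ^ 5 / 20 - (y - b) ^ 5 / 20)) {a..b}"
    using order by (intro has_integral_combine[OF _ _ has_integral_combine[OF _ _ left middle] right]) auto
  have uv: "x - a = u" "y - b = - u" "x - m = - v" "y - m = v" "y = x + 2 * v"
    by (simp_all add: u_def v_def y_def m_def field_simps)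
  have "Phi y - Phi x = v ^ 5 / 10 + 2 * d * v ^ 3 / 3 + 2 * d\<^sup>2 * v"
    unfolding Phi_def uv(3,4) by (simp add: uv(5) field_simps eval_nat_numeral)
  then show ?thesis
    unfolding K_def[symmetric]
    by (intro has_integral_eq_rhs[OF pieces]) (simp add: uv(1,2) d_def field_simps eval_nat_numeral)
qed

lemma integral_peano_kernel_sq_le:
  assumes x: "a \<le> x" "x \<le> (a + b) / 2"
  shows "integral {a..b} (\<lambda>t. (peano_kernel a b x t)\<^sup>2)
           \<le> (b - a) ^ 3 / pi\<^sup>2 * ((b - a)\<^sup>2 / 48 + (x - (3 * a + b) / 4)\<^sup>2)"
proof -
  define u v where "u = x - a" and "v = (a + b) / 2 - x"
  define A where "A = u ^ 5 / 10 + v ^ 5 / 10 + (u\<^sup>2 - v\<^sup>2) * v ^ 3 / 3 + (u\<^sup>2 - v\<^sup>2)\<^sup>2 * v / 2"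
  define Q where "Q = (b - a)\<^sup>2 / 48 + (x - (3 * a + b) / 4)\<^sup>2"
  have A_int: "((\<lambda>t. (peano_kernel a b x t)\<^sup>2) has_integral A) {a..b}"
    using has_integral_peano_kernel_sq[OF x] unfolding A_def u_def v_def .
  then have "0 \<le> A" by (rule has_integral_nonneg) simp
  have "u \<ge> 0" "v \<ge> 0" using x by (simp_all add: u_def v_def)
  have uv: "b - a = 2 * (u + v)" "x - (3 * a + b) / 4 = (u - v) / 2"
    by (simp_all add: u_def v_def field_simps)
  have "(b - a) ^ 3 * Q - 10 * A
      = 5/3 * u^5 + 1/3 * u^4 * v + 8/3 * u^3 * v^2 + 28/3 * u^2 * v^3 + 16/3 * u * v^4"
    unfolding Q_def A_def uv by (simp add: field_simps eval_nat_numeral)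
  also have "\<dots> \<ge> 0"
    using \<open>u \<ge> 0\<close> \<open>v \<ge> 0\<close> by (intro add_nonneg_nonneg mult_nonneg_nonneg) auto
  finally have "10 * A \<le> (b - a) ^ 3 * Q" by simp
  moreover have "pi\<^sup>2 * A \<le> 10 * A"
    using pi_squared_le_10 \<open>0 \<le> A\<close> by (rule mult_right_mono)
  ultimately have "pi\<^sup>2 * A \<le> (b - a) ^ 3 * Q" by linarith
  then show ?thesis
    using A_int unfolding Q_def[symmetric] by (simp add: integral_unique field_simps)
qed

lemma abs_integral_peano_kernel_mult_le:
  fixes g :: "real \<Rightarrow> real"
  assumes x: "a \<le> x" "x \<le> (a + b) / 2"
    and I: "((\<lambda>t. peano_kernel a b x t * g t) has_integral I) {a..b}"
    and g_L2: "(\<lambda>t. (g t)\<^sup>2) integrable_on {a..b}"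
  shows "\<bar>I\<bar> \<le> (b - a) * sqrt (b - a) / pi
                 * sqrt ((b - a)\<^sup>2 / 48 + (x - (3 * a + b) / 4)\<^sup>2) * l2norm_on a b g"
proof -
  define K where "K = peano_kernel a b x"
  define Q where "Q = (b - a)\<^sup>2 / 48 + (x - (3 * a + b) / 4)\<^sup>2"
  have "\<bar>I\<bar> \<le> sqrt (integral {a..b} (\<lambda>t. (K t)\<^sup>2)) * l2norm_on a b g"
    unfolding l2norm_on_def
  proof (rule has_integral_Cauchy_Schwarz[OF I[folded K_def]])
    show "((\<lambda>t. (K t)\<^sup>2) has_integral integral {a..b} (\<lambda>t. (K t)\<^sup>2)) {a..b}"
      unfolding K_def using has_integral_peano_kernel_sq[OF x]
      by (intro integrable_integral has_integral_integrable)
    show "((\<lambda>t. (g t)\<^sup>2) has_integral integral {a..b} (\<lambda>t. (g t)\<^sup>2)) {a..b}"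
      using g_L2 by (rule integrable_integral)
  qed
  also have "\<dots> \<le> sqrt ((b - a) ^ 3 / pi\<^sup>2 * Q) * l2norm_on a b g"
    using integral_peano_kernel_sq_le[OF x] unfolding K_def Q_def
    by (intro mult_right_mono) (simp_all add: l2norm_on_def integral_nonneg g_L2)
  also have "sqrt ((b - a) ^ 3 / pi\<^sup>2 * Q) = (b - a) * sqrt (b - a) / pi * sqrt Q"
    using x by (simp add: real_sqrt_mult real_sqrt_divide eval_nat_numeral)
  finally show ?thesis unfolding Q_def .
qed

theorem theorem4p2:
  fixes a b :: real and f f' F :: "real \<Rightarrow> real"
  assumes ab: "a < b"
    and f_range: "\<forall>t\<in>{a..b}. 0 \<le> f t \<and> f t \<le> 1"
    and f_int: "f integrable_on {a..b}"
    and f_total: "integral {a..b} f = 1"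
    and F_def: "\<forall>x\<in>{a..b}. F x = integral {a..x} f"
    and F_deriv: "\<forall>x\<in>{a<..<b}. (F has_real_derivative f x) (at x)"
    and f_deriv: "\<forall>x\<in>{a<..<b}. (f has_real_derivative f' x) (at x)"
    and f'_cont: "continuous_on {a<..<b} f'"
    and f'_L2: "(\<lambda>t. (f' t)\<^sup>2) integrable_on {a..b}"
    and x: "x \<in> {a..(a+b)/2}"
  shows "\<bar>(F x + F (a + b - x)) / 2 - (b - expect_dens a b f) / (b - a)\<bar>
           \<le> sqrt (b - a) / pi * sqrt ((b - a)\<^sup>2 / 48 + (x - (3*a + b) / 4)\<^sup>2)
              * l2norm_on a b f'"
proof -
  define I where "I = integral {a..b} F - (b - a) / 2 * (F x + F (a + b - x))"
  have x: "a \<le> x" "x \<le> (a + b) / 2" using x by auto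
  have F_cont: "continuous_on {a..b} F"
    using indefinite_integral_continuous_1[OF f_int] by (rule continuous_on_eq) (simp add: F_def)
  have "F a = 0" "F b = 1" using F_def f_total ab by auto
  then have E: "expect_dens a b f = b - integral {a..b} F"
    using ab by (intro expect_dens_eq_integral_cdf[OF _ F_cont F_deriv]) auto
  have "((\<lambda>t. peano_kernel a b x t * f' t) has_integral I) {a..b}"
    unfolding I_def using f_range
    by (intro has_integral_peano_kernel_mult_deriv[OF x F_cont F_deriv f_deriv, of 1]) auto
  then have "\<bar>I\<bar> \<le> (b - a) * sqrt (b - a) / pi
                 * sqrt ((b - a)\<^sup>2 / 48 + (x - (3 * a + b) / 4)\<^sup>2) * l2norm_on a b f'"
    by (rule abs_integral_peano_kernel_mult_le[OF x _ f'_L2])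
  moreover have "(F x + F (a + b - x)) / 2 - (b - expect_dens a b f) / (b - a) = - I / (b - a)"
    unfolding E I_def using ab by (simp add: field_simps)
  ultimately show ?thesis
    using ab by (simp add: abs_minus_cancel pos_divide_le_eq mult_ac)
qed

end
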